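(* Let $v_0=(q^c-1)(q^b+q^{b-1}-1)$. For all integers $v\ge v_0$ and $s,t\ge0$, $$\#\Omega_{v,0,s,t}=1-g+v+q^{b-1}s+(q-1)t.$$
   Context: $q$ is a power of a prime $p$, $b\ge1$ an integer, $a=b+1$, $c=a+b$, $N_k=(q^k-1)/(q-1)$, and $g=\frac12\big((q^c-2)(q^{a-1}+q^{b-1}-2)+(q^c-q)\big)$. For integers $v,r,s,t$: $\Omega_{v,r,s,t}=\{(i,j,k)\in\mathbb{Z}^3:\ -v\le i,\ -r\le i+(q^c-1)k<-r+(q^c-1),\ -s\le -q^ai+(q^c-1)j<(q^c-1)-s,\ -t\le q^{a-1}N_bi-q^{b-1}N_cj-(q^{a-1}-1)N_ck\}$. *)

theory Defs
  imports "HOL-Computational_Algebra.Primes"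
begin

definition prime_power :: "nat \<Rightarrow> bool" where
  "prime_power q \<longleftrightarrow> (\<exists>p k. prime p \<and> k \<ge> 1 \<and> q = p ^ k)"

text \<open>N_k = (q^k - 1)/(q - 1), an exact integer division for q \<ge> 2.\<close>
definition NN :: "int \<Rightarrow> nat \<Rightarrow> int" where
  "NN q k = (q ^ k - 1) div (q - 1)"

text \<open>The genus g, with a = b+1, c = a+b; the numerator is always even.\<close>
definition genus :: "int \<Rightarrow> nat \<Rightarrow> int" where
  "genus q b = (let a = b + 1; c = a + b in
     ((q ^ c - 2) * (q ^ (a - 1) + q ^ (b - 1) - 2) + (q ^ c - q)) div 2)"

definition Omega :: "int \<Rightarrow> nat \<Rightarrow> int \<Rightarrow> int \<Rightarrow> int \<Rightarrow> int \<Rightarrow> (int \<times> int \<times> int) set" where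
  "Omega q b v r s t = (let a = b + 1; c = a + b in
     {(i, j, k). -v \<le> i \<and>
        -r \<le> i + (q ^ c - 1) * k \<and> i + (q ^ c - 1) * k < -r + (q ^ c - 1) \<and>
        -s \<le> - (q ^ a) * i + (q ^ c - 1) * j \<and> - (q ^ a) * i + (q ^ c - 1) * j < (q ^ c - 1) - s \<and>
        -t \<le> q ^ (a - 1) * NN q b * i - q ^ (b - 1) * NN q c * j - (q ^ (a - 1) - 1) * NN q c * k})"

end

(*
  Write i = M m + r with 0 \<le> r < M, where M = q^c - 1. The two double inequalities then
  determine k = -m and j uniquely, and the two remaining inequalities say that m runs through
  an integer interval whose endpoints are floors of affine functions of r. For v \<ge> v_0 none of
  these intervals has negative length, so #\<Omega> is a sum over r of (upper floor - lower floor + 1).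
  The lower floors sum to v (Hermite's identity). In the upper floors, the remainders of
  r \<mapsto> -q^a r + s modulo M and of r \<mapsto> q^(a-1) N_b r + t modulo N_c run through permutations
  of the residues, because the multipliers are coprime to the moduli; so every floor sum
  reduces to an arithmetic series, and the resulting polynomial identity is the value of g.
*)

theory Submission
  imports Defs
begin

lemma le_div_iff_mult_le_int:
  fixes m z n :: int
  assumes "n > 0"
  shows "m \<le> z div n \<longleftrightarrow> n * m \<le> z"
proof
  assume "m \<le> z div n"
  then have "n * m \<le> n * (z div n)" using assms by simp
  also have "\<dots> \<le> z" using assms by (simp add: minus_mod_eq_mult_div [symmetric])
  finally show "n * m \<le> z" .
next
  assume "n * m \<le> z"
  then have "(n * m) div n \<le> z div n" using assms by (intro zdiv_mono1) auto
  then show "m \<le> z div n" using assms by simp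
qed

lemma add_mult_bounds_iff_eq_neg_div:
  fixes x j M :: int
  assumes "M > 0"
  shows "0 \<le> x + M * j \<and> x + M * j < M \<longleftrightarrow> j = - (x div M)"
proof -
  have "0 \<le> x + M * j \<and> x + M * j < M \<longleftrightarrow> (x + M * j) div M = 0"
    unfolding zdiv_eq_0_iff using assms by auto
  also have "(x + M * j) div M = x div M + j" using assms by simp
  finally show ?thesis by linarith
qed

lemma double_sum_atLeastLessThan_int:
  fixes n :: int
  assumes "n \<ge> 0"
  shows "2 * (\<Sum>w\<in>{0..<n}. w) = n * (n - 1)"
proof -
  have "2 * (\<Sum>w\<in>{0..<int k}. w) = int k * (int k - 1)" for k
  proof (induction k)
    case (Suc k)
    have "{0..<int (Suc k)} = insert (int k) {0..<int k}" by auto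
    then show ?case using Suc by (simp add: algebra_simps)
  qed simp
  from this[of "nat n"] assms show ?thesis by simp
qed

lemma coprime_if_lincomb_eq_1:
  fixes a b u w :: int
  assumes "a * u + b * w = 1"
  shows "coprime a b"
proof (rule coprimeI)
  fix c assume "c dvd a" "c dvd b"
  then have "c dvd a * u + b * w" by simp
  then show "is_unit c" using assms by simp
qed

lemma sum_affine_mod_eq_sum:
  fixes n A t :: int
  assumes n: "n > 0" and cop: "coprime A n"
  shows "(\<Sum>w\<in>{0..<n}. (A * w + t) mod n) = (\<Sum>w\<in>{0..<n}. w)"
proof -
  define f where "f w = (A * w + t) mod n" for w
  have inj: "inj_on f {0..<n}"
  proof (rule inj_onI)
    fix x y assume x: "x \<in> {0..<n}" and y: "y \<in> {0..<n}" and "f x = f y"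
    then have "n dvd A * (x - y)" unfolding f_def by (simp add: mod_eq_dvd_iff algebra_simps)
    then have "x mod n = y mod n"
      using cop by (simp add: mod_eq_dvd_iff coprime_commute coprime_dvd_mult_right_iff)
    then show "x = y" using x y by simp
  qed
  have "f ` {0..<n} = {0..<n}" by (rule endo_inj_surj) (use n inj in \<open>auto simp: f_def\<close>)
  then show ?thesis using sum.reindex[OF inj, of id] by (simp add: f_def)
qed

lemma sum_mod_periodic:
  fixes n :: int and F :: "int \<Rightarrow> int"
  assumes n: "n > 0"
  shows "(\<Sum>r\<in>{0..<int k * n}. F (r mod n)) = int k * (\<Sum>w\<in>{0..<n}. F w)"
proof (induction k)
  case (Suc k)
  have "{0..<int (Suc k) * n} = {0..<int k * n} \<union> {int k * n..<int k * n + n}"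
    using n by (auto simp: algebra_simps) (smt (verit) mult_nonneg_nonneg of_nat_0_le_iff)
  then have "(\<Sum>r\<in>{0..<int (Suc k) * n}. F (r mod n))
      = (\<Sum>r\<in>{0..<int k * n}. F (r mod n)) + (\<Sum>r\<in>{int k * n..<int k * n + n}. F (r mod n))"
    by (simp add: sum.union_disjoint ivl_disj_int_two(3))
  also have "(\<Sum>r\<in>{int k * n..<int k * n + n}. F (r mod n)) = (\<Sum>w\<in>{0..<n}. F w)"
  proof -
    have shift: "{int k * n..<int k * n + n} = (\<lambda>w. w + int k * n) ` {0..<n}"
      by (simp add: image_add_atLeastLessThan' add.commute)
    show ?thesis unfolding shift by (subst sum.reindex) (auto simp: inj_on_def intro!: sum.cong)
  qed
  finally show ?case using Suc by (simp add: algebra_simps)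
qed simp

lemma sum_add_div_eq:
  fixes M v :: int
  assumes M: "M > 0"
  shows "(\<Sum>r\<in>{0..<M}. (v + r) div M) = v"
proof -
  have "M * (\<Sum>r\<in>{0..<M}. (v + r) div M) = (\<Sum>r\<in>{0..<M}. (v + r) - (1 * r + v) mod M)"
    unfolding sum_distrib_left by (rule sum.cong) (simp_all add: minus_mod_eq_mult_div add.commute)
  also have "\<dots> = M * v"
    using M sum_affine_mod_eq_sum[OF M, of 1 v] by (simp add: sum_subtractf sum.distrib)
  finally show ?thesis using M by simp
qed

text \<open>The region fibres over r = i mod M: with i = M m + r, the conditions force k = -m and
  j = A m - F r, and leave L r \<le> m \<le> U r.\<close>

lemma card_lattice_region:
  fixes M n A B C D v s t :: int
  assumes M: "M > 0" and n: "n > 0" and coef: "B * M - C * A + D = - n"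
  shows "card {(i, j, k). -v \<le> i \<and> 0 \<le> i + M * k \<and> i + M * k < M
              \<and> -s \<le> -A * i + M * j \<and> -A * i + M * j < M - s \<and> -t \<le> B * i - C * j - D * k}
    = (\<Sum>r\<in>{0..<M}. nat ((B * r + C * ((s - A * r) div M) + t) div n + (v + r) div M + 1))"
    (is "card ?\<Omega> = _")
proof -
  define F where "F r = (s - A * r) div M" for r
  define L where "L r = - ((v + r) div M)" for r
  define U where "U r = (B * r + C * F r + t) div n" for r
  define \<psi> where "\<psi> = (\<lambda>(r, m). (M * m + r, A * m - F r, - m))"
  have mem: "(M * m + r, j, k) \<in> ?\<Omega> \<longleftrightarrow> j = A * m - F r \<and> k = - m \<and> L r \<le> m \<and> m \<le> U r"
    if r: "r \<in> {0..<M}" for r m j k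
  proof -
    have "(M * m + r) div M = m" using r M by simp
    then have k: "0 \<le> M * m + r + M * k \<and> M * m + r + M * k < M \<longleftrightarrow> k = - m"
      using add_mult_bounds_iff_eq_neg_div[OF M, of "M * m + r" k] by simp
    have "s - A * (M * m + r) = (s - A * r) + (- A * m) * M" by (simp add: algebra_simps)
    then have "(s - A * (M * m + r)) div M = F r - A * m"
      unfolding F_def using M by (simp only: div_mult_self1)
    then have j: "-s \<le> -A * (M * m + r) + M * j \<and> -A * (M * m + r) + M * j < M - s
        \<longleftrightarrow> j = A * m - F r"
      using add_mult_bounds_iff_eq_neg_div[OF M, of "s - A * (M * m + r)" j] by auto
    have i: "-v \<le> M * m + r \<longleftrightarrow> L r \<le> m"
      using le_div_iff_mult_le_int[OF M, of "- m" "v + r"] unfolding L_def by auto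
    have "B * (M * m + r) - C * (A * m - F r) - D * (- m) = (B * M - C * A + D) * m + B * r + C * F r"
      by (simp add: algebra_simps)
    then have "-t \<le> B * (M * m + r) - C * (A * m - F r) - D * (- m) \<longleftrightarrow> m \<le> U r"
      using le_div_iff_mult_le_int[OF n, of m "B * r + C * F r + t"] unfolding U_def coef by auto
    with i j k show ?thesis by auto
  qed
  have "?\<Omega> = \<psi> ` (SIGMA r:{0..<M}. {L r..U r})"
  proof (intro set_eqI iffI)
    fix x assume "x \<in> ?\<Omega>"
    moreover obtain i j k where x: "x = (i, j, k)" by (cases x)
    moreover have "i = M * (i div M) + i mod M" by simp
    moreover have "i mod M \<in> {0..<M}" using M by simp
    ultimately show "x \<in> \<psi> ` (SIGMA r:{0..<M}. {L r..U r})"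
      using mem[of "i mod M" "i div M" j k] unfolding \<psi>_def
      by (auto intro!: image_eqI[where x = "(i mod M, i div M)"])
  next
    fix x assume "x \<in> \<psi> ` (SIGMA r:{0..<M}. {L r..U r})"
    then obtain r m where "r \<in> {0..<M}" "m \<in> {L r..U r}" and "x = (M * m + r, A * m - F r, - m)"
      unfolding \<psi>_def by auto
    then show "x \<in> ?\<Omega>" using mem[of r m "A * m - F r" "- m"] by simp
  qed
  moreover have "inj_on \<psi> (SIGMA r:{0..<M}. {L r..U r})"
    by (auto simp: \<psi>_def inj_on_def)
  ultimately have "card ?\<Omega> = (\<Sum>r\<in>{0..<M}. card {L r..U r})"
    by (simp add: card_image card_SigmaI)
  then show ?thesis by (simp add: L_def U_def F_def)
qed

text \<open>The parameters stand for Q = q, X = q^b = q^(a-1), Y = q^(b-1), M = q^c - 1, n = N_c and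
  Nb = N_b; only the relations between them are used.\<close>

locale genus_count =
  fixes Q X Y M n Nb :: int
  assumes Q_ge_2: "Q \<ge> 2" and X_eq: "X = Q * Y" and Y_pos: "Y \<ge> 1"
    and M_eq: "M = Q * X^2 - 1" and n_mult: "n * (Q - 1) = M" and Nb_mult: "Nb * (Q - 1) = X - 1"
begin

lemma X_ge_2: "X \<ge> 2"
  using Q_ge_2 Y_pos mult_mono[of 2 Q 1 Y] by (simp add: X_eq)

lemma M_pos: "M > 0"
proof -
  have "X^2 \<ge> 2^2" using X_ge_2 by (intro power_mono) auto
  then have "Q * X^2 \<ge> 2 * 4" using Q_ge_2 by (intro mult_mono) auto
  then show ?thesis by (simp add: M_eq)
qed

lemma n_pos: "n > 0"
  using M_pos Q_ge_2 n_mult by (smt (verit) mult_nonpos_nonneg)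

lemma mult_Q_minus_1_cancel: "(Q - 1) * a = (Q - 1) * b \<Longrightarrow> a = b"
  using Q_ge_2 by simp

lemma coefficient_identity: "X * Nb * M - Y * n * (Q * X) + (X - 1) * n = - n"
  by (rule mult_Q_minus_1_cancel) (use X_eq M_eq n_mult Nb_mult in algebra)

lemma n_eq: "n = Nb * (Q * X + Q) + 1"
  by (rule mult_Q_minus_1_cancel) (use M_eq n_mult Nb_mult in algebra)

lemma coprime_QX_M: "coprime (- (Q * X)) M"
  by (rule coprime_if_lincomb_eq_1[of _ "- X" _ "- 1"]) (simp add: M_eq power2_eq_square algebra_simps)

lemma coprime_XNb_n: "coprime (X * Nb) n"
proof -
  have "coprime X n"
    by (rule coprime_if_lincomb_eq_1[of _ "Q * X" _ "1 - Q"]) (use M_eq n_mult in algebra)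
  moreover have "coprime Nb n"
    by (rule coprime_if_lincomb_eq_1[of _ "- (Q * X + Q)" _ 1]) (simp add: n_eq algebra_simps)
  ultimately show ?thesis by simp
qed

definition region :: "int \<Rightarrow> int \<Rightarrow> int \<Rightarrow> (int \<times> int \<times> int) set" where
  "region v s t = {(i, j, k). -v \<le> i \<and> 0 \<le> i + M * k \<and> i + M * k < M
     \<and> -s \<le> - (Q * X) * i + M * j \<and> - (Q * X) * i + M * j < M - s
     \<and> -t \<le> X * Nb * i - Y * n * j - (X - 1) * n * k}"

lemma card_region:
  "card (region v s t) = (\<Sum>r\<in>{0..<M}.
     nat ((X * Nb * r + Y * n * ((s - Q * X * r) div M) + t) div n + (v + r) div M + 1))"
  unfolding region_def by (rule card_lattice_region[OF M_pos n_pos coefficient_identity])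

text \<open>This is the only place where the lower bound on v is needed.\<close>

lemma fibre_card_nonneg:
  assumes v: "v \<ge> M * (X + Y - 1)" and s: "s \<ge> 0" and t: "t \<ge> 0" and r: "r \<in> {0..<M}"
  shows "0 \<le> (X * Nb * r + Y * n * ((s - Q * X * r) div M) + t) div n + (v + r) div M + 1"
proof -
  define F where "F = (s - Q * X * r) div M"
  define h where "h = X * Nb * r + Y * n * F"
  define d where "d = (v + r) div M"
  have "M * F = s - Q * X * r - (s - Q * X * r) mod M"
    unfolding F_def by (simp add: minus_mod_eq_mult_div)
  moreover have "(s - Q * X * r) mod M < M" using M_pos by simp
  ultimately have "M * F > - (Q * X * r) - M" using s by linarith
  then have "Y * (M * F) \<ge> Y * (- (Q * X * r) - M)" using Y_pos by (intro mult_left_mono) auto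
  moreover have "Y * (- (Q * X * r) - M) = - (X * X * r) - Y * M" by (simp add: X_eq algebra_simps)
  moreover have "(Q - 1) * h = X * X * r - X * r + Y * (M * F)"
  proof -
    have "(Q - 1) * h = X * r * (Nb * (Q - 1)) + Y * F * (n * (Q - 1))"
      unfolding h_def by (simp add: algebra_simps)
    also have "\<dots> = X * r * (X - 1) + Y * F * M" by (simp only: n_mult Nb_mult)
    finally show ?thesis by (simp add: algebra_simps)
  qed
  moreover have "X * r - r \<le> X * M - M"
    using mult_right_mono[of r M "X - 1"] r X_ge_2 by (simp add: algebra_simps)
  moreover have "M * (X + Y - 1) = X * M + Y * M - M" by (simp add: algebra_simps)
  ultimately have "(Q - 1) * h \<ge> - v - r" using v by linarith
  moreover have "v + r < M * (d + 1)"
    using le_div_iff_mult_le_int[OF M_pos, of "d + 1" "v + r"] unfolding d_def by linarith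
  moreover have "(Q - 1) * (n * (- (d + 1))) = - (M * (d + 1))"
    by (simp add: n_mult [symmetric] algebra_simps)
  moreover have "(Q - 1) * (h + t) = (Q - 1) * h + (Q - 1) * t" by (simp add: algebra_simps)
  moreover have "(Q - 1) * t \<ge> 0" using Q_ge_2 t by simp
  ultimately have "(Q - 1) * (n * (- (d + 1))) \<le> (Q - 1) * (h + t)" by linarith
  then have "n * (- (d + 1)) \<le> h + t" using Q_ge_2 by simp
  then have "- (d + 1) \<le> (h + t) div n" using le_div_iff_mult_le_int[OF n_pos] by blast
  then show ?thesis unfolding F_def d_def h_def by simp
qed

lemma sum_lower_floor:
  "M * (\<Sum>r\<in>{0..<M}. (s - Q * X * r) div M) = M * s - (Q * X + 1) * (\<Sum>r\<in>{0..<M}. r)"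
proof -
  have "M * (\<Sum>r\<in>{0..<M}. (s - Q * X * r) div M)
      = (\<Sum>r\<in>{0..<M}. s - Q * X * r - (- (Q * X) * r + s) mod M)"
    unfolding sum_distrib_left by (rule sum.cong) (simp_all add: minus_mod_eq_mult_div)
  also have "\<dots> = M * s - Q * X * (\<Sum>r\<in>{0..<M}. r) - (\<Sum>r\<in>{0..<M}. (- (Q * X) * r + s) mod M)"
    using M_pos by (simp add: sum_subtractf sum_distrib_left)
  also have "(\<Sum>r\<in>{0..<M}. (- (Q * X) * r + s) mod M) = (\<Sum>r\<in>{0..<M}. r)"
    by (rule sum_affine_mod_eq_sum[OF M_pos coprime_QX_M])
  finally show ?thesis by (simp add: algebra_simps)
qed

text \<open>Since n divides Y n F and M = (Q - 1) n, the remainders modulo n depend only on r mod n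
  and run (Q - 1) times through a permutation of the residues.\<close>

lemma sum_upper_floor:
  "n * (\<Sum>r\<in>{0..<M}. (X * Nb * r + Y * n * ((s - Q * X * r) div M) + t) div n)
     = X * Nb * (\<Sum>r\<in>{0..<M}. r) + Y * n * (\<Sum>r\<in>{0..<M}. (s - Q * X * r) div M) + M * t
       - (Q - 1) * (\<Sum>w\<in>{0..<n}. w)"
proof -
  have "n * (\<Sum>r\<in>{0..<M}. (X * Nb * r + Y * n * ((s - Q * X * r) div M) + t) div n)
      = (\<Sum>r\<in>{0..<M}. X * Nb * r + Y * n * ((s - Q * X * r) div M) + t - (X * Nb * (r mod n) + t) mod n)"
    unfolding sum_distrib_left
  proof (rule sum.cong)
    fix r
    have "X * Nb * r + Y * n * ((s - Q * X * r) div M) + t = (X * Nb * r + t) + Y * ((s - Q * X * r) div M) * n"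
      by (simp add: algebra_simps)
    then have "(X * Nb * r + Y * n * ((s - Q * X * r) div M) + t) mod n = (X * Nb * r + t) mod n"
      by (simp only: mod_mult_self1)
    also have "\<dots> = (X * Nb * (r mod n) + t) mod n" by (metis mod_add_left_eq mod_mult_right_eq)
    finally show "n * ((X * Nb * r + Y * n * ((s - Q * X * r) div M) + t) div n)
        = X * Nb * r + Y * n * ((s - Q * X * r) div M) + t - (X * Nb * (r mod n) + t) mod n"
      by (simp add: minus_mod_eq_mult_div [symmetric])
  qed simp
  moreover have "(\<Sum>r\<in>{0..<M}. (X * Nb * (r mod n) + t) mod n) = (Q - 1) * (\<Sum>w\<in>{0..<n}. w)"
  proof -
    have "M = int (nat (Q - 1)) * n" using n_mult Q_ge_2 by (simp add: mult.commute)
    then have "(\<Sum>r\<in>{0..<M}. (X * Nb * (r mod n) + t) mod n)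
        = (Q - 1) * (\<Sum>w\<in>{0..<n}. (X * Nb * w + t) mod n)"
      using sum_mod_periodic[OF n_pos, of "\<lambda>w. (X * Nb * w + t) mod n" "nat (Q - 1)"] Q_ge_2 by simp
    then show ?thesis using sum_affine_mod_eq_sum[OF n_pos coprime_XNb_n] by simp
  qed
  ultimately show ?thesis
    using M_pos by (simp add: sum_subtractf sum.distrib sum_distrib_left)
qed

lemma genus_identity:
  fixes R Rn SF SU s t :: int
  assumes "2 * R = M * (M - 1)" and "2 * Rn = n * (n - 1)"
    and "M * SF = M * s - (Q * X + 1) * R"
    and "n * SU = X * Nb * R + Y * n * SF + M * t - (Q - 1) * Rn"
  shows "2 * (1 + Y * s + (Q - 1) * t - SU - M) = (Q * X^2 - 2) * (X + Y - 2) + (Q * X^2 - Q)"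
proof -
  have "(Q - 1) * M * (2 * (1 + Y * s + (Q - 1) * t - SU - M)
      - ((Q * X^2 - 2) * (X + Y - 2) + (Q * X^2 - Q))) = 0"
    using assms n_mult Nb_mult X_eq M_eq by algebra
  then show ?thesis using Q_ge_2 M_pos by simp
qed

theorem card_region_formula:
  assumes v: "v \<ge> M * (X + Y - 1)" and s: "s \<ge> 0" and t: "t \<ge> 0"
  shows "2 * (1 + v + Y * s + (Q - 1) * t - int (card (region v s t)))
           = (Q * X^2 - 2) * (X + Y - 2) + (Q * X^2 - Q)"
proof -
  define R where "R = (\<Sum>r\<in>{0..<M}. r)"
  define Rn where "Rn = (\<Sum>w\<in>{0..<n}. w)"
  define SF where "SF = (\<Sum>r\<in>{0..<M}. (s - Q * X * r) div M)"
  define SU where "SU = (\<Sum>r\<in>{0..<M}. (X * Nb * r + Y * n * ((s - Q * X * r) div M) + t) div n)"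
  have "int (card (region v s t))
      = (\<Sum>r\<in>{0..<M}. (X * Nb * r + Y * n * ((s - Q * X * r) div M) + t) div n + (v + r) div M + 1)"
    unfolding card_region of_nat_sum using fibre_card_nonneg[OF v s t] by (intro sum.cong) auto
  then have card: "int (card (region v s t)) = SU + v + M"
    using M_pos sum_add_div_eq[OF M_pos, of v] by (simp add: sum.distrib SU_def)
  have "2 * R = M * (M - 1)" "2 * Rn = n * (n - 1)"
    using double_sum_atLeastLessThan_int M_pos n_pos by (simp_all add: R_def Rn_def)
  moreover have "M * SF = M * s - (Q * X + 1) * R" unfolding SF_def R_def by (rule sum_lower_floor)
  moreover have "n * SU = X * Nb * R + Y * n * SF + M * t - (Q - 1) * Rn"
    unfolding SU_def SF_def R_def Rn_def by (rule sum_upper_floor)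
  ultimately have "2 * (1 + Y * s + (Q - 1) * t - SU - M) = (Q * X^2 - 2) * (X + Y - 2) + (Q * X^2 - Q)"
    by (rule genus_identity)
  then show ?thesis using card by simp
qed

end

lemma NN_mult_eq: "(q::int) \<ge> 2 \<Longrightarrow> NN q k * (q - 1) = q ^ k - 1"
  unfolding NN_def by (simp add: power_diff_1_eq)

lemma prime_power_ge_2: "prime_power q \<Longrightarrow> q \<ge> 2"
proof -
  assume "prime_power q"
  then obtain p k where "prime p" "k \<ge> 1" "q = p ^ k" unfolding prime_power_def by blast
  then show "q \<ge> 2" using prime_ge_2_nat[of p] self_le_power[of p k] by simp
qed

theorem lemma3:
  fixes q b :: nat and v s t :: int
  assumes "prime_power q" and "b \<ge> 1"
    and "v \<ge> (int q ^ (2 * b + 1) - 1) * (int q ^ b + int q ^ (b - 1) - 1)"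
    and "s \<ge> 0" and "t \<ge> 0"
  shows "int (card (Omega (int q) b v 0 s t))
           = 1 - genus (int q) b + v + int q ^ (b - 1) * s + (int q - 1) * t"
proof -
  define Q where "Q = int q"
  have Q: "Q \<ge> 2" using prime_power_ge_2[OF assms(1)] by (simp add: Q_def)
  define X Y where "X = Q ^ b" and "Y = Q ^ (b - 1)"
  define M n Nb where "M = Q * X^2 - 1" and "n = NN Q (b + 1 + b)" and "Nb = NN Q b"
  have Qa: "Q ^ (b + 1) = Q * X" and Qa1: "Q ^ (b + 1 - 1) = X" and X_eq: "X = Q * Y"
    using \<open>b \<ge> 1\<close> by (simp_all add: X_def Y_def flip: power_Suc)
  have Qc: "Q ^ (b + 1 + b) = Q * X^2" and Q2b: "Q ^ (2 * b + 1) = Q * X^2"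
    by (simp_all add: X_def power_add power_mult power2_eq_square mult_2)
  have Y: "Y \<ge> 1" using Q by (simp add: Y_def)
  have n_mult: "n * (Q - 1) = M" unfolding n_def M_def NN_mult_eq[OF Q] Qc ..
  have Nb_mult: "Nb * (Q - 1) = X - 1" unfolding Nb_def X_def NN_mult_eq[OF Q] ..
  interpret genus_count Q X Y M n Nb
    by unfold_locales (fact Q X_eq Y M_def n_mult Nb_mult)+
  have "v \<ge> M * (X + Y - 1)"
    using assms(3) unfolding M_def by (simp only: Q2b flip: Q_def X_def Y_def)
  from card_region_formula[OF this assms(4,5)]
  have "genus Q b = 1 + v + Y * s + (Q - 1) * t - int (card (region v s t))"
    unfolding genus_def Let_def by (simp only: Qa1 Qc flip: Y_def) simp
  moreover have "Omega Q b v 0 s t = region v s t"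
  proof -
    have Mc: "Q ^ (b + 1 + b) - 1 = M" unfolding Qc M_def ..
    show ?thesis unfolding Omega_def region_def Let_def
      by (simp only: Mc Qa Qa1 flip: Y_def n_def Nb_def) simp
  qed
  ultimately show ?thesis unfolding Q_def [symmetric] Y_def [symmetric] by simp
qed

end
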